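(* Let $\mathcal{X}=\{x_k\}_{k=1}^\infty$ be a frame for the complex Hilbert space $\ell_2$. The following are equivalent: (1) $\mathcal{X}$ is injective; (2) $\overline{\mathrm{span}}\{\tilde{x}_k\}_{k=1}^\infty=\tilde{\mathbb{H}}$.
   Context: A family $\{x_k\}$ is called injective if whenever a Hilbert–Schmidt self-adjoint operator $T$ on $\ell_2$ satisfies $\langle Tx_k,x_k\rangle=0$ for all $k$, then $T=0$. Let $\tilde{\mathbb{H}}=\left(\sum_{i=1}^\infty\oplus\ell_2\right)_{\ell_2}$ be the $\ell_2$-direct sum of countably many copies of real $\ell_2$, with elements $(\vec{x}_1,\vec{x}_2,\dots)$ and inner product $\sum_i\langle\vec{x}_i,\vec{y}_i\rangle$. For $x=(x_i)_{i=1}^\infty\in\ell_2$ (complex), define $\tilde{x}=(\vec{x}_1,\vec{x}_2,\dots)\in\tilde{\mathbb{H}}$ with $\vec{x}_n=(|x_n|^2,\mathrm{Re}(\bar{x}_nx_{n+1}),\mathrm{Im}(\bar{x}_nx_{n+1}),\mathrm{Re}(\bar{x}_nx_{n+2}),\mathrm{Im}(\bar{x}_nx_{n+2}),\dots)$. *)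

theory Defs
  imports "HOL-Analysis.Analysis"
begin

text \<open>Complex l2 = square-summable sequences nat => complex (0-indexed).\<close>
definition l2 :: "(nat \<Rightarrow> complex) set" where
  "l2 = {x. summable (\<lambda>i. (cmod (x i))^2)}"

definition l2norm2 :: "(nat \<Rightarrow> complex) \<Rightarrow> real" where
  "l2norm2 x = (\<Sum>i. (cmod (x i))^2)"

definition l2inner :: "(nat \<Rightarrow> complex) \<Rightarrow> (nat \<Rightarrow> complex) \<Rightarrow> complex" where
  "l2inner x y = (\<Sum>i. x i * cnj (y i))"

definition is_frame :: "(nat \<Rightarrow> nat \<Rightarrow> complex) \<Rightarrow> bool" where
  "is_frame X \<longleftrightarrow> (\<forall>k. X k \<in> l2) \<and>
     (\<exists>A B. 0 < A \<and> A \<le> B \<and>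
       (\<forall>x\<in>l2. summable (\<lambda>k. (cmod (l2inner x (X k)))^2) \<and>
          A * l2norm2 x \<le> (\<Sum>k. (cmod (l2inner x (X k)))^2) \<and>
          (\<Sum>k. (cmod (l2inner x (X k)))^2) \<le> B * l2norm2 x))"

text \<open>A Hilbert-Schmidt self-adjoint operator on l2, given by its matrix
  t i j = <T e_j, e_i> w.r.t. the standard basis: square-summable entries and
  Hermitian symmetry.\<close>
definition hs_selfadjoint :: "(nat \<Rightarrow> nat \<Rightarrow> complex) \<Rightarrow> bool" where
  "hs_selfadjoint t \<longleftrightarrow> (\<forall>i j. t j i = cnj (t i j)) \<and>
     (\<lambda>(i,j). (cmod (t i j))^2) summable_on UNIV"

text \<open>Quadratic form <T x, x> with (T x)_i = sum_j t i j * x j.\<close>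
definition quad_form :: "(nat \<Rightarrow> nat \<Rightarrow> complex) \<Rightarrow> (nat \<Rightarrow> complex) \<Rightarrow> complex" where
  "quad_form t x = (\<Sum>i. (\<Sum>j. t i j * x j) * cnj (x i))"

definition injective_family :: "(nat \<Rightarrow> nat \<Rightarrow> complex) \<Rightarrow> bool" where
  "injective_family X \<longleftrightarrow>
     (\<forall>t. hs_selfadjoint t \<and> (\<forall>k. quad_form t (X k) = 0) \<longrightarrow> (\<forall>i j. t i j = 0))"

text \<open>The space tilde H = l2-direct sum of copies of real l2, elements v with
  v n = n-th block (a real sequence).\<close>
definition Htil :: "(nat \<Rightarrow> nat \<Rightarrow> real) set" where
  "Htil = {v. (\<lambda>(n,j). (v n j)^2) summable_on UNIV}"

definition Htil_norm :: "(nat \<Rightarrow> nat \<Rightarrow> real) \<Rightarrow> real" where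
  "Htil_norm v = sqrt (\<Sum>\<^sub>\<infinity>(n,j)\<in>UNIV. (v n j)^2)"

text \<open>tilde x: block n is (|x_n|^2, Re(cnj x_n x_{n+1}), Im(cnj x_n x_{n+1}),
  Re(cnj x_n x_{n+2}), ...); coordinate 0 is |x_n|^2, coordinate 2m-1 is
  Re(cnj x_n x_{n+m}) and coordinate 2m is Im(cnj x_n x_{n+m}) for m >= 1.\<close>
definition tilde :: "(nat \<Rightarrow> complex) \<Rightarrow> nat \<Rightarrow> nat \<Rightarrow> real" where
  "tilde x n j =
     (if j = 0 then (cmod (x n))^2
      else if odd j then Re (cnj (x n) * x (n + (j + 1) div 2))
      else Im (cnj (x n) * x (n + (j + 1) div 2)))"

definition closed_span_is_Htil :: "(nat \<Rightarrow> nat \<Rightarrow> complex) \<Rightarrow> bool" where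
  "closed_span_is_Htil X \<longleftrightarrow>
     (\<forall>v\<in>Htil. \<forall>e>0. \<exists>F c. finite F \<and>
        Htil_norm (\<lambda>n j. v n j - (\<Sum>k\<in>F. c k * tilde (X k) n j)) < e)"

end

theory Submission
  imports Defs
begin

text \<open>A self-adjoint Hilbert-Schmidt matrix \<open>t\<close> is determined by its diagonal and upper
  triangle. Writing \<open>Re t n n\<close>, \<open>2 Re t n (n + m)\<close> and \<open>-2 Im t n (n + m)\<close> into the slots
  that \<open>tilde x\<close> uses for \<open>|x n|\<^sup>2\<close>, \<open>Re (cnj (x n) x (n + m))\<close> and \<open>Im (cnj (x n) x (n + m))\<close>
  gives a real-linear bijection \<open>hs_vector\<close> onto \<open>tilde H\<close> with
  \<open>quad_form t x = \<langle>hs_vector t, tilde x\<rangle>\<close>. Hence the family is injective iff no nonzero vector of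
  \<open>tilde H\<close> is orthogonal to every \<open>tilde (X k)\<close>, and since \<open>tilde H\<close> is a Hilbert space (real
  square-summable functions on \<open>nat \<times> nat\<close>) this means that their span is dense.\<close>

section \<open>Real square-summable functions on an arbitrary index type\<close>

definition square_summable :: "('a \<Rightarrow> real) \<Rightarrow> bool" where
  "square_summable f \<longleftrightarrow> (\<lambda>x. (f x)^2) summable_on UNIV"

lemma summable_on_mult_if_square_summable:
  assumes "square_summable f" "square_summable g"
  shows "(\<lambda>x. f x * g x) summable_on UNIV"
proof -
  have "(\<lambda>x. (f x)^2 + (g x)^2) summable_on UNIV"
    using assms unfolding square_summable_def by (intro summable_on_add)
  then have "(\<lambda>x. norm (f x * g x)) summable_on UNIV"
  proof (rule summable_on_comparison_test)
    fix x
    have "2 * \<bar>f x\<bar> * \<bar>g x\<bar> \<le> (f x)^2 + (g x)^2"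
      using sum_squares_bound[of "\<bar>f x\<bar>" "\<bar>g x\<bar>"] by simp
    moreover have "0 \<le> \<bar>f x\<bar> * \<bar>g x\<bar>" by simp
    ultimately show "norm (f x * g x) \<le> (f x)^2 + (g x)^2"
      unfolding real_norm_def abs_mult by linarith
  qed simp
  then show ?thesis using summable_on_iff_abs_summable_on_real by blast
qed

lemma square_summable_add:
  assumes "square_summable f" "square_summable g"
  shows "square_summable (\<lambda>x. f x + g x)"
proof -
  have "(\<lambda>x. (f x)^2 + 2 * (f x * g x) + (g x)^2) summable_on UNIV"
    using assms summable_on_mult_if_square_summable[OF assms] unfolding square_summable_def
    by (intro summable_on_add summable_on_cmult_right)
  moreover have "(\<lambda>x. (f x + g x)^2) = (\<lambda>x. (f x)^2 + 2 * (f x * g x) + (g x)^2)"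
    by (simp add: power2_sum algebra_simps)
  ultimately show ?thesis unfolding square_summable_def by simp
qed

lemma square_summable_scale: "square_summable f \<Longrightarrow> square_summable (\<lambda>x. c * f x)"
  using summable_on_cmult_right[of "\<lambda>x. (f x)^2" UNIV "c^2"]
  unfolding square_summable_def by (simp add: power_mult_distrib)

lemma square_summable_diff:
  assumes "square_summable f" "square_summable g"
  shows "square_summable (\<lambda>x. f x - g x)"
  using square_summable_add[OF assms(1) square_summable_scale[OF assms(2), of "-1"]] by simp

lemma square_summable_zero: "square_summable (\<lambda>x. 0)"
  unfolding square_summable_def by simp

lemma square_summable_if_bounded_finite_sums:
  assumes "\<And>F. finite F \<Longrightarrow> (\<Sum>x\<in>F. (f x)^2) \<le> C"
  shows "square_summable f" "infsum (\<lambda>x. (f x)^2) UNIV \<le> C"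
proof -
  have bdd: "bdd_above (sum (\<lambda>x. (f x)^2) ` {F. F \<subseteq> UNIV \<and> finite F})"
    using assms by (auto intro!: bdd_aboveI)
  show "square_summable f" unfolding square_summable_def
    by (rule nonneg_bdd_above_summable_on[OF _ bdd]) simp
  have "infsum (\<lambda>x. (f x)^2) UNIV = (SUP F\<in>{F. finite F \<and> F \<subseteq> UNIV}. \<Sum>x\<in>F. (f x)^2)"
    by (rule nonneg_bdd_above_infsum[OF _ bdd]) simp
  also have "\<dots> \<le> C" by (rule cSUP_least) (auto intro: assms)
  finally show "infsum (\<lambda>x. (f x)^2) UNIV \<le> C" .
qed

typedef 'a ell2 = "{f :: 'a \<Rightarrow> real. square_summable f}"
  morphisms coord Abs_ell2
  using square_summable_zero by blast

lemma square_summable_coord: "square_summable (coord x)"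
  using coord by simp

lemma coord_Abs_ell2: "square_summable f \<Longrightarrow> coord (Abs_ell2 f) = f"
  by (simp add: Abs_ell2_inverse)

lemma ell2_eqI: "(\<And>p. coord x p = coord y p) \<Longrightarrow> x = y"
  by (metis ext coord_inject)

instantiation ell2 :: (type) real_inner
begin

definition zero_ell2 :: "'a ell2" where "zero_ell2 = Abs_ell2 (\<lambda>_. 0)"
definition plus_ell2 :: "'a ell2 \<Rightarrow> 'a ell2 \<Rightarrow> 'a ell2" where
  "plus_ell2 x y = Abs_ell2 (\<lambda>p. coord x p + coord y p)"
definition minus_ell2 :: "'a ell2 \<Rightarrow> 'a ell2 \<Rightarrow> 'a ell2" where
  "minus_ell2 x y = Abs_ell2 (\<lambda>p. coord x p - coord y p)"
definition uminus_ell2 :: "'a ell2 \<Rightarrow> 'a ell2" where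
  "uminus_ell2 x = Abs_ell2 (\<lambda>p. - coord x p)"
definition scaleR_ell2 :: "real \<Rightarrow> 'a ell2 \<Rightarrow> 'a ell2" where
  "scaleR_ell2 r x = Abs_ell2 (\<lambda>p. r * coord x p)"
definition inner_ell2 :: "'a ell2 \<Rightarrow> 'a ell2 \<Rightarrow> real" where
  "inner_ell2 x y = infsum (\<lambda>p. coord x p * coord y p) UNIV"
definition norm_ell2 :: "'a ell2 \<Rightarrow> real" where "norm_ell2 x = sqrt (inner x x)"
definition dist_ell2 :: "'a ell2 \<Rightarrow> 'a ell2 \<Rightarrow> real" where "dist_ell2 x y = norm (x - y)"
definition sgn_ell2 :: "'a ell2 \<Rightarrow> 'a ell2" where "sgn_ell2 x = inverse (norm x) *\<^sub>R x"
definition uniformity_ell2 :: "('a ell2 \<times> 'a ell2) filter" where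
  "uniformity_ell2 = (INF e\<in>{0 <..}. principal {(x, y). dist x y < e})"
definition open_ell2 :: "'a ell2 set \<Rightarrow> bool" where
  "open_ell2 U = (\<forall>x\<in>U. eventually (\<lambda>(x', y). x' = x \<longrightarrow> y \<in> U) uniformity)"

lemma coord_zero [simp]: "coord 0 = (\<lambda>_. 0)"
  by (simp add: zero_ell2_def coord_Abs_ell2 square_summable_zero)

lemma coord_add [simp]: "coord (x + y) = (\<lambda>p. coord x p + coord y p)"
  by (simp add: plus_ell2_def coord_Abs_ell2 square_summable_add square_summable_coord)

lemma coord_diff [simp]: "coord (x - y) = (\<lambda>p. coord x p - coord y p)"
  by (simp add: minus_ell2_def coord_Abs_ell2 square_summable_diff square_summable_coord)

lemma coord_scaleR [simp]: "coord (r *\<^sub>R x) = (\<lambda>p. r * coord x p)"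
  by (simp add: scaleR_ell2_def coord_Abs_ell2 square_summable_scale square_summable_coord)

lemma coord_uminus [simp]: "coord (- x) = (\<lambda>p. - coord x p)"
  using coord_scaleR[of "-1" x] by (simp add: uminus_ell2_def scaleR_ell2_def)

lemma summable_on_coord_mult: "(\<lambda>p. coord x p * coord y p) summable_on UNIV"
  by (rule summable_on_mult_if_square_summable[OF square_summable_coord square_summable_coord])

instance
proof
  fix x y z :: "'a ell2" and a b :: real
  show "x + y + z = x + (y + z)" "x + y = y + x" "0 + x = x" "- x + x = 0" "x - y = x + - y"
    by (auto intro: ell2_eqI)
  show "a *\<^sub>R (x + y) = a *\<^sub>R x + a *\<^sub>R y" "(a + b) *\<^sub>R x = a *\<^sub>R x + b *\<^sub>R x"
    by (auto intro: ell2_eqI simp: algebra_simps)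
  show "a *\<^sub>R b *\<^sub>R x = (a * b) *\<^sub>R x" "1 *\<^sub>R x = x"
    by (auto intro: ell2_eqI)
  show "sgn x = inverse (norm x) *\<^sub>R x" "dist x y = norm (x - y)" "norm x = sqrt (inner x x)"
    by (simp_all add: sgn_ell2_def dist_ell2_def norm_ell2_def)
  show "(uniformity :: ('a ell2 \<times> 'a ell2) filter) = (INF e\<in>{0 <..}. principal {(x, y). dist x y < e})"
    by (simp add: uniformity_ell2_def)
  show "open U = (\<forall>x\<in>U. eventually (\<lambda>(x', y). x' = x \<longrightarrow> y \<in> U) uniformity)"
    for U :: "'a ell2 set"
    by (simp add: open_ell2_def)
  show "inner x y = inner y x"
    by (simp add: inner_ell2_def mult.commute)
  show "inner (x + y) z = inner x z + inner y z"
    by (simp add: inner_ell2_def distrib_right infsum_add summable_on_coord_mult)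
  show "inner (a *\<^sub>R x) y = a * inner x y"
    by (simp add: inner_ell2_def mult.assoc infsum_cmult_right')
  show "0 \<le> inner x x"
    by (simp add: inner_ell2_def infsum_nonneg)
  show "(inner x x = 0) = (x = 0)"
  proof
    assume "inner x x = 0"
    show "x = 0"
    proof (rule ell2_eqI)
      fix p
      have "(\<Sum>q\<in>{p}. coord x q * coord x q) \<le> inner x x"
        unfolding inner_ell2_def
        by (rule finite_sum_le_infsum) (auto simp: summable_on_coord_mult)
      then show "coord x p = coord 0 p"
        using \<open>inner x x = 0\<close> by (auto simp: mult_le_0_iff)
    qed
  qed (simp add: inner_ell2_def)
qed

end

lemma norm_ell2_square: "(norm x)^2 = infsum (\<lambda>p. (coord x p)^2) UNIV"
  unfolding power2_norm_eq_inner inner_ell2_def by (simp add: power2_eq_square)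

lemma sum_coord_square_le: "finite F \<Longrightarrow> (\<Sum>p\<in>F. (coord x p)^2) \<le> (norm x)^2"
  unfolding norm_ell2_square
  by (rule finite_sum_le_infsum) (use square_summable_coord[of x] in \<open>auto simp: square_summable_def\<close>)

lemma abs_coord_le_norm: "\<bar>coord x p\<bar> \<le> norm x"
  using sum_coord_square_le[of "{p}" x] abs_le_square_iff[of "coord x p" "norm x"] by simp

lemma Cauchy_coord:
  assumes "Cauchy X"
  shows "Cauchy (\<lambda>n. coord (X n) p)"
proof (rule metric_CauchyI)
  fix e :: real assume "e > 0"
  then obtain M where "\<forall>m\<ge>M. \<forall>n\<ge>M. dist (X m) (X n) < e"
    using metric_CauchyD[OF assms] by blast
  moreover have "dist (coord (X m) p) (coord (X n) p) \<le> dist (X m) (X n)" for m n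
    using abs_coord_le_norm[of "X m - X n" p] by (simp add: dist_real_def dist_norm)
  ultimately show "\<exists>M. \<forall>m\<ge>M. \<forall>n\<ge>M. dist (coord (X m) p) (coord (X n) p) < e"
    by (meson order.strict_trans1)
qed

lemma Cauchy_tail_square_sum_le:
  assumes "Cauchy X" and coord_lim: "\<And>p. (\<lambda>n. coord (X n) p) \<longlonglongrightarrow> L p" and "e > 0"
  obtains M where "\<And>n. n \<ge> M \<Longrightarrow> square_summable (\<lambda>p. coord (X n) p - L p)"
    "\<And>n. n \<ge> M \<Longrightarrow> infsum (\<lambda>p. (coord (X n) p - L p)^2) UNIV \<le> e^2"
proof -
  obtain M where M: "\<forall>m\<ge>M. \<forall>n\<ge>M. norm (X m - X n) < e"
    using metric_CauchyD[OF \<open>Cauchy X\<close> \<open>e > 0\<close>] by (auto simp: dist_norm)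
  have bound: "(\<Sum>p\<in>F. (coord (X n) p - L p)^2) \<le> e^2" if "n \<ge> M" "finite F" for n F
  proof (rule LIMSEQ_le_const2)
    show "(\<lambda>m. \<Sum>p\<in>F. (coord (X n) p - coord (X m) p)^2) \<longlonglongrightarrow> (\<Sum>p\<in>F. (coord (X n) p - L p)^2)"
      by (intro tendsto_intros coord_lim)
    have "(\<Sum>p\<in>F. (coord (X n) p - coord (X m) p)^2) \<le> e^2" if "m \<ge> M" for m
    proof -
      have "(\<Sum>p\<in>F. (coord (X n) p - coord (X m) p)^2) \<le> (norm (X n - X m))^2"
        using sum_coord_square_le[OF \<open>finite F\<close>, of "X n - X m"] by simp
      also have "\<dots> \<le> e^2"
        using M \<open>n \<ge> M\<close> \<open>m \<ge> M\<close> by (intro power_mono) (auto simp: less_imp_le)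
      finally show ?thesis .
    qed
    then show "\<exists>N. \<forall>m\<ge>N. (\<Sum>p\<in>F. (coord (X n) p - coord (X m) p)^2) \<le> e^2"
      by blast
  qed
  show ?thesis
  proof (rule that)
    fix n assume "n \<ge> M"
    show "square_summable (\<lambda>p. coord (X n) p - L p)"
      by (rule square_summable_if_bounded_finite_sums(1)[OF bound[OF \<open>n \<ge> M\<close>]])
  next
    fix n assume "n \<ge> M"
    show "infsum (\<lambda>p. (coord (X n) p - L p)^2) UNIV \<le> e^2"
      by (rule square_summable_if_bounded_finite_sums(2)[OF bound[OF \<open>n \<ge> M\<close>]])
  qed
qed

instance ell2 :: (type) complete_space
proof
  fix X :: "nat \<Rightarrow> 'a ell2"
  assume "Cauchy X"
  define L where "L p = lim (\<lambda>n. coord (X n) p)" for p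
  have coord_lim: "(\<lambda>n. coord (X n) p) \<longlonglongrightarrow> L p" for p
    using Cauchy_coord[OF \<open>Cauchy X\<close>] unfolding L_def
    by (simp add: Cauchy_convergent_iff convergent_LIMSEQ_iff)
  obtain M where tail: "\<And>n. n \<ge> M \<Longrightarrow> square_summable (\<lambda>p. coord (X n) p - L p)"
    and "\<And>n. n \<ge> M \<Longrightarrow> infsum (\<lambda>p. (coord (X n) p - L p)^2) UNIV \<le> 1^2"
    using Cauchy_tail_square_sum_le[OF \<open>Cauchy X\<close> coord_lim zero_less_one] by blast
  have "square_summable L"
    using square_summable_diff[OF square_summable_coord[of "X M"] tail[OF order_refl]] by simp
  then have coord_L: "coord (Abs_ell2 L) = L"
    by (rule coord_Abs_ell2)
  have "X \<longlonglongrightarrow> Abs_ell2 L"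
  proof (rule metric_LIMSEQ_I)
    fix r :: real assume "r > 0"
    then have "r/2 > 0"
      by simp
    then obtain M where "\<And>n. n \<ge> M \<Longrightarrow> square_summable (\<lambda>p. coord (X n) p - L p)"
      and M: "\<And>n. n \<ge> M \<Longrightarrow> infsum (\<lambda>p. (coord (X n) p - L p)^2) UNIV \<le> (r/2)^2"
      using Cauchy_tail_square_sum_le[OF \<open>Cauchy X\<close> coord_lim] by blast
    have "dist (X n) (Abs_ell2 L) < r" if "n \<ge> M" for n
    proof -
      have "(norm (X n - Abs_ell2 L))^2 \<le> (r/2)^2"
        using M[OF that] by (simp add: norm_ell2_square coord_L)
      then have "norm (X n - Abs_ell2 L) \<le> r/2"
        using \<open>r > 0\<close> by (simp add: power2_le_iff_abs_le)
      then show ?thesis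
        using \<open>r > 0\<close> by (simp add: dist_norm)
    qed
    then show "\<exists>M. \<forall>n\<ge>M. dist (X n) (Abs_ell2 L) < r"
      by blast
  qed
  then show "convergent X"
    by (auto simp: convergent_def)
qed

section \<open>Vectors orthogonal to a non-dense span\<close>

lemma parallelogram_law:
  fixes x y :: "'a::real_inner"
  shows "(norm (x - y))^2 + (norm (x + y))^2 = 2 * (norm x)^2 + 2 * (norm y)^2"
  by (simp add: power2_norm_eq_inner inner_add_left inner_add_right inner_diff_left
      inner_diff_right inner_commute)

lemma inner_eq_0_if_norm_le_norm_diff:
  fixes u b :: "'a::real_inner"
  assumes "\<And>t. norm u \<le> norm (u - t *\<^sub>R b)"
  shows "inner u b = 0"
proof (cases "b = 0")
  case False
  define c where "c = inner u b"
  define t where "t = c / (norm b)^2"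
  have "(norm (u - t *\<^sub>R b))^2 = (norm u)^2 - c^2 / (norm b)^2"
    using False unfolding t_def c_def power2_norm_eq_inner
    by (simp add: inner_diff_left inner_diff_right inner_commute power2_eq_square field_simps)
  moreover have "(norm u)^2 \<le> (norm (u - t *\<^sub>R b))^2"
    using assms by (simp add: power_mono)
  ultimately have "c^2 / (norm b)^2 \<le> 0"
    by simp
  then show ?thesis
    using False by (simp add: c_def divide_le_0_iff)
qed simp

lemma Cauchy_if_dist_le_add:
  fixes s :: "nat \<Rightarrow> 'a::metric_space"
  assumes "e \<longlonglongrightarrow> 0" "\<And>m n. dist (s m) (s n) \<le> e m + e n"
  shows "Cauchy s"
proof (rule metric_CauchyI)
  fix r :: real assume "r > 0"
  then obtain M where "\<forall>n\<ge>M. e n < r / 2"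
    using order_tendstoD(2)[OF assms(1), of "r / 2"] by (auto simp: eventually_sequentially)
  then show "\<exists>M. \<forall>m\<ge>M. \<forall>n\<ge>M. dist (s m) (s n) < r"
    using assms(2) by (smt (verit, best) field_sum_of_halves)
qed

lemma exists_dist_less_if_infdist_less:
  assumes "S \<noteq> {}" "infdist x S < r"
  obtains a where "a \<in> S" "dist x a < r"
  using assms by (auto simp: infdist_notempty cINF_less_iff)

lemma Cauchy_minimizing_sequence:
  fixes v :: "'a::real_inner"
  assumes midpoint: "\<And>x y. x \<in> S \<Longrightarrow> y \<in> S \<Longrightarrow> (1/2) *\<^sub>R (x + y) \<in> S"
    and s: "\<And>n. s n \<in> S" "\<And>n. (norm (v - s n))^2 \<le> (infdist v S)^2 + e n"
    and e: "e \<longlonglongrightarrow> 0"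
  shows "Cauchy s"
proof (rule Cauchy_if_dist_le_add)
  show "(\<lambda>n. sqrt (2 * e n)) \<longlonglongrightarrow> 0"
    using tendsto_real_sqrt[OF tendsto_mult_right_zero[OF e, of 2]] by simp
  fix m n
  let ?d = "infdist v S"
  have e_nonneg: "0 \<le> e k" for k
  proof -
    have "?d \<le> norm (v - s k)"
      using infdist_le[OF s(1)] by (simp add: dist_norm)
    then have "?d^2 \<le> (norm (v - s k))^2"
      by (intro power_mono) (auto simp: infdist_nonneg)
    then show ?thesis
      using s(2)[of k] by simp
  qed
  have "?d \<le> norm (v - (1/2) *\<^sub>R (s m + s n))"
    using infdist_le[OF midpoint[OF s(1) s(1)], of v] by (simp add: dist_norm)
  then have "(2 * ?d)^2 \<le> (norm (2 *\<^sub>R (v - (1/2) *\<^sub>R (s m + s n))))^2"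
    by (intro power_mono) (auto simp: infdist_nonneg)
  also have "2 *\<^sub>R (v - (1/2) *\<^sub>R (s m + s n)) = (v - s m) + (v - s n)"
    by (simp add: algebra_simps scaleR_2)
  finally have "(norm (s m - s n))^2 \<le> 2 * e m + 2 * e n"
    using parallelogram_law[of "v - s m" "v - s n"] s(2)[of m] s(2)[of n]
    by (simp add: power_mult_distrib norm_minus_commute)
  then have "dist (s m) (s n) \<le> sqrt (2 * e m + 2 * e n)"
    by (simp add: dist_norm real_le_rsqrt)
  also have "\<dots> \<le> sqrt (2 * e m) + sqrt (2 * e n)"
    by (rule sqrt_add_le_add_sqrt) (simp_all add: e_nonneg)
  finally show "dist (s m) (s n) \<le> sqrt (2 * e m) + sqrt (2 * e n)" .
qed

lemma exists_minimizing_sequence: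
  assumes "S \<noteq> {}"
  obtains s where "\<And>n. s n \<in> S" "\<And>n. (norm (v - s n))^2 \<le> (infdist v S)^2 + 1 / (real n + 1)"
proof -
  let ?d = "infdist v S"
  have "\<exists>a\<in>S. dist v a < sqrt (?d^2 + 1 / (real n + 1))" for n
  proof -
    have "?d < sqrt (?d^2 + 1 / (real n + 1))"
      using infdist_nonneg[of v S] by (intro real_less_rsqrt) simp
    then show ?thesis
      using exists_dist_less_if_infdist_less[OF assms] by metis
  qed
  then obtain s where s: "\<And>n. s n \<in> S" "\<And>n. dist v (s n) < sqrt (?d^2 + 1 / (real n + 1))"
    by metis
  have "(norm (v - s n))^2 \<le> ?d^2 + 1 / (real n + 1)" for n
  proof -
    have "(norm (v - s n))^2 < (sqrt (?d^2 + 1 / (real n + 1)))^2"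
      using s(2)[of n] by (intro power_strict_mono) (auto simp: dist_norm)
    then show ?thesis
      by simp
  qed
  with s(1) show ?thesis
    by (rule that)
qed

lemma exists_nearest_point_closure_subspace:
  fixes v :: "'a::{real_inner,complete_space}"
  assumes "subspace S"
  obtains p where "p \<in> closure S" "\<And>q. q \<in> S \<Longrightarrow> norm (v - p) \<le> norm (v - (p + q))"
proof -
  let ?d = "infdist v S"
  obtain s where s: "\<And>n. s n \<in> S" and s_bound: "\<And>n. (norm (v - s n))^2 \<le> ?d^2 + 1 / (real n + 1)"
    using exists_minimizing_sequence[of S v] subspace_0[OF assms] by blast
  have lim_e: "(\<lambda>n. 1 / (real n + 1)) \<longlonglongrightarrow> 0"
    using LIMSEQ_inverse_real_of_nat by (simp add: inverse_eq_divide add.commute)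
  have midpoint: "(1/2) *\<^sub>R (x + y) \<in> S" if "x \<in> S" "y \<in> S" for x y
    using assms that by (intro subspace_mul subspace_add)
  have "Cauchy s"
    by (rule Cauchy_minimizing_sequence[OF midpoint s(1) s_bound lim_e])
  then obtain p where p: "s \<longlonglongrightarrow> p"
    using Cauchy_convergent_iff convergent_def by blast
  show ?thesis
  proof
    show "p \<in> closure S"
      using p s(1) by (auto simp: closure_sequential)
    fix q assume "q \<in> S"
    have "(norm (v - p))^2 \<le> ?d^2"
    proof (rule LIMSEQ_le)
      show "(\<lambda>n. (norm (v - s n))^2) \<longlonglongrightarrow> (norm (v - p))^2"
        by (intro tendsto_intros p)
      show "(\<lambda>n. ?d^2 + 1 / (real n + 1)) \<longlonglongrightarrow> ?d^2"
        using tendsto_add[OF tendsto_const lim_e] by simp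
    qed (use s_bound in auto)
    also have "?d^2 \<le> (norm (v - (p + q)))^2"
    proof (rule LIMSEQ_le)
      show "(\<lambda>n. (norm (v - (s n + q)))^2) \<longlonglongrightarrow> (norm (v - (p + q)))^2"
        by (intro tendsto_intros p)
      have "?d \<le> norm (v - (s n + q))" for n
        using infdist_le[OF subspace_add[OF assms s(1) \<open>q \<in> S\<close>]] by (simp add: dist_norm)
      then show "\<exists>N. \<forall>n\<ge>N. ?d^2 \<le> (norm (v - (s n + q)))^2"
        by (auto intro!: power_mono simp: infdist_nonneg)
    qed simp
    finally show "norm (v - p) \<le> norm (v - (p + q))"
      by (simp add: power2_le_iff_abs_le)
  qed
qed

lemma exists_orthogonal_if_notin_closure_span:
  fixes v :: "'a::{real_inner,complete_space}"
  assumes "v \<notin> closure (span B)"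
  obtains u where "u \<noteq> 0" "\<And>b. b \<in> B \<Longrightarrow> inner u b = 0"
proof -
  obtain p where p: "p \<in> closure (span B)"
    and nearest: "\<And>q. q \<in> span B \<Longrightarrow> norm (v - p) \<le> norm (v - (p + q))"
    using exists_nearest_point_closure_subspace[OF subspace_span] by blast
  show ?thesis
  proof
    show "v - p \<noteq> 0"
      using assms p by auto
    fix b assume "b \<in> B"
    show "inner (v - p) b = 0"
    proof (rule inner_eq_0_if_norm_le_norm_diff)
      show "norm (v - p) \<le> norm (v - p - t *\<^sub>R b)" for t
        using nearest[of "t *\<^sub>R b"] \<open>b \<in> B\<close> by (simp add: span_base span_mul diff_diff_eq)
    qed
  qed
qed

lemma dense_span_iff_orthogonal_eq_0:
  fixes B :: "'a::{real_inner,complete_space} set"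
  shows "closure (span B) = UNIV \<longleftrightarrow> (\<forall>u. (\<forall>b\<in>B. inner u b = 0) \<longrightarrow> u = 0)"
proof
  assume dense: "closure (span B) = UNIV"
  show "\<forall>u. (\<forall>b\<in>B. inner u b = 0) \<longrightarrow> u = 0"
  proof (intro allI impI)
    fix u assume "\<forall>b\<in>B. inner u b = 0"
    then have "span B \<subseteq> {y. inner u y = 0}"
      using orthogonal_to_span[of _ B u] by (auto simp: orthogonal_def)
    then have "closure (span B) \<subseteq> {y. inner u y = 0}"
      by (rule closure_minimal) (rule closed_hyperplane)
    then have "u \<in> {y. inner u y = 0}"
      by (rule subsetD) (simp add: dense)
    then show "u = 0"
      by simp
  qed
next
  assume trivial: "\<forall>u. (\<forall>b\<in>B. inner u b = 0) \<longrightarrow> u = 0"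
  show "closure (span B) = UNIV"
  proof (rule ccontr)
    assume "closure (span B) \<noteq> UNIV"
    then obtain v where "v \<notin> closure (span B)"
      by auto
    then obtain u where "u \<noteq> 0" "\<And>b. b \<in> B \<Longrightarrow> inner u b = 0"
      using exists_orthogonal_if_notin_closure_span by metis
    then show False
      using trivial by auto
  qed
qed

section \<open>Partitions of \<open>\<nat> \<times> \<nat>\<close>\<close>

definition partition_by_injections :: "('a \<Rightarrow> 'i) \<Rightarrow> ('b \<Rightarrow> 'i) \<Rightarrow> ('c \<Rightarrow> 'i) \<Rightarrow> bool" where
  "partition_by_injections h0 h1 h2 \<longleftrightarrow> inj h0 \<and> inj h1 \<and> inj h2 \<and>
     range h0 \<inter> range h1 = {} \<and> range h0 \<inter> range h2 = {} \<and> range h1 \<inter> range h2 = {} \<and>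
     range h0 \<union> range h1 \<union> range h2 = UNIV"

lemma has_sum_partition_by_injections:
  fixes f :: "'i \<Rightarrow> 'v::topological_comm_monoid_add"
  assumes "partition_by_injections h0 h1 h2"
    and "((f \<circ> h0) has_sum a) UNIV" "((f \<circ> h1) has_sum b) UNIV" "((f \<circ> h2) has_sum c) UNIV"
  shows "(f has_sum (a + b + c)) UNIV"
proof -
  note P = assms(1)[unfolded partition_by_injections_def]
  have "(f has_sum a) (range h0)" "(f has_sum b) (range h1)" "(f has_sum c) (range h2)"
    using assms(2-4) P by (simp_all add: has_sum_reindex)
  then have "(f has_sum (a + b + c)) (range h0 \<union> range h1 \<union> range h2)"
    using P by (intro has_sum_Un_disjoint) auto
  then show ?thesis
    using P by simp
qed

lemma
  fixes f :: "'i \<Rightarrow> 'v::banach"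
  assumes "partition_by_injections h0 h1 h2"
    and "(f \<circ> h0) summable_on UNIV" "(f \<circ> h1) summable_on UNIV" "(f \<circ> h2) summable_on UNIV"
  shows summable_on_partition_by_injections: "f summable_on UNIV"
    and infsum_partition_by_injections:
      "infsum f UNIV = infsum (f \<circ> h0) UNIV + infsum (f \<circ> h1) UNIV + infsum (f \<circ> h2) UNIV"
  using has_sum_partition_by_injections[OF assms(1) has_sum_infsum[OF assms(2)]
      has_sum_infsum[OF assms(3)] has_sum_infsum[OF assms(4)]]
  by (auto simp: summable_on_def infsumI)

lemma summable_on_comp_inj:
  fixes f :: "'i \<Rightarrow> 'v::banach"
  assumes "f summable_on UNIV" "inj h"
  shows "(f \<circ> h) summable_on UNIV"
  using summable_on_subset_banach[OF assms(1), of "range h"] summable_on_reindex[OF assms(2)] by auto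

text \<open>The coordinates \<open>block_odd (n, m)\<close> and \<open>block_even (n, m)\<close> of \<open>tilde x\<close> are the real and
  imaginary parts belonging to the matrix position \<open>upper_entry (n, m)\<close>.\<close>

definition block_head :: "nat \<Rightarrow> nat \<times> nat" where
  "block_head n = (n, 0)"

definition block_odd :: "nat \<times> nat \<Rightarrow> nat \<times> nat" where
  "block_odd = (\<lambda>(n, m). (n, 2 * m + 1))"

definition block_even :: "nat \<times> nat \<Rightarrow> nat \<times> nat" where
  "block_even = (\<lambda>(n, m). (n, 2 * m + 2))"

definition diag_entry :: "nat \<Rightarrow> nat \<times> nat" where
  "diag_entry n = (n, n)"

definition upper_entry :: "nat \<times> nat \<Rightarrow> nat \<times> nat" where
  "upper_entry = (\<lambda>(n, m). (n, n + m + 1))"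

definition lower_entry :: "nat \<times> nat \<Rightarrow> nat \<times> nat" where
  "lower_entry = (\<lambda>(n, m). (n + m + 1, n))"

lemma partition_blocks: "partition_by_injections block_head block_odd block_even"
proof -
  have "range block_head \<union> range block_odd \<union> range block_even = UNIV"
  proof (intro set_eqI iffI)
    fix x :: "nat \<times> nat"
    obtain n j where x: "x = (n, j)" by (cases x)
    consider "j = 0" | "odd j" | "j \<noteq> 0" "even j" by blast
    then show "x \<in> range block_head \<union> range block_odd \<union> range block_even"
    proof cases
      case 1
      then show ?thesis by (auto simp: x block_head_def)
    next
      case 2
      then have "x = block_odd (n, (j - 1) div 2)" by (auto simp: x block_odd_def)
      then show ?thesis by blast
    next
      case 3
      then have "x = block_even (n, (j - 2) div 2)" by (auto simp: x block_even_def)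
      then show ?thesis by blast
    qed
  qed simp
  moreover have "inj block_head" "inj block_odd" "inj block_even"
    by (auto simp: inj_def block_head_def block_odd_def block_even_def)
  moreover have "range block_head \<inter> range block_odd = {}" "range block_head \<inter> range block_even = {}"
    "range block_odd \<inter> range block_even = {}"
    by (auto simp: block_head_def block_odd_def block_even_def) presburger
  ultimately show ?thesis
    unfolding partition_by_injections_def by blast
qed

lemma partition_entries: "partition_by_injections diag_entry upper_entry lower_entry"
proof -
  have "range diag_entry \<union> range upper_entry \<union> range lower_entry = UNIV"
  proof (intro set_eqI iffI)
    fix x :: "nat \<times> nat"
    obtain i j where x: "x = (i, j)" by (cases x)
    consider "i = j" | "i < j" | "j < i" by linarith
    then show "x \<in> range diag_entry \<union> range upper_entry \<union> range lower_entry"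
    proof cases
      case 1
      then show ?thesis by (auto simp: x diag_entry_def)
    next
      case 2
      then have "x = upper_entry (i, j - i - 1)" by (auto simp: x upper_entry_def)
      then show ?thesis by blast
    next
      case 3
      then have "x = lower_entry (j, i - j - 1)" by (auto simp: x lower_entry_def)
      then show ?thesis by blast
    qed
  qed simp
  moreover have "inj diag_entry" "inj upper_entry" "inj lower_entry"
    by (auto simp: inj_def diag_entry_def upper_entry_def lower_entry_def)
  moreover have "range diag_entry \<inter> range upper_entry = {}" "range diag_entry \<inter> range lower_entry = {}"
    "range upper_entry \<inter> range lower_entry = {}"
    by (auto simp: diag_entry_def upper_entry_def lower_entry_def)
  ultimately show ?thesis
    unfolding partition_by_injections_def by blast
qed

section \<open>The space \<open>tilde H\<close> and self-adjoint Hilbert-Schmidt matrices\<close>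

lemma Htil_iff_square_summable: "w \<in> Htil \<longleftrightarrow> square_summable (\<lambda>(n, j). w n j)"
  unfolding Htil_def square_summable_def by (simp add: case_prod_unfold)

definition ell2_of :: "(nat \<Rightarrow> nat \<Rightarrow> real) \<Rightarrow> (nat \<times> nat) ell2" where
  "ell2_of w = Abs_ell2 (\<lambda>(n, j). w n j)"

lemma coord_ell2_of: "w \<in> Htil \<Longrightarrow> coord (ell2_of w) = (\<lambda>(n, j). w n j)"
  unfolding ell2_of_def by (simp add: coord_Abs_ell2 Htil_iff_square_summable)

lemma inner_ell2_of:
  "w \<in> Htil \<Longrightarrow> w' \<in> Htil \<Longrightarrow> inner (ell2_of w) (ell2_of w') = infsum (\<lambda>(n, j). w n j * w' n j) UNIV"
  by (simp add: inner_ell2_def coord_ell2_of case_prod_unfold)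

lemma Htil_norm_eq_norm_ell2_of: "w \<in> Htil \<Longrightarrow> Htil_norm w = norm (ell2_of w)"
  unfolding Htil_norm_def norm_eq_sqrt_inner by (simp add: inner_ell2_of power2_eq_square)

lemma curry_coord_in_Htil: "(\<lambda>n j. coord u (n, j)) \<in> Htil"
  using square_summable_coord[of u] by (simp add: Htil_iff_square_summable)

lemma ell2_of_curry_coord: "ell2_of (\<lambda>n j. coord u (n, j)) = u"
  unfolding ell2_of_def by (simp add: coord_inverse)

lemma summable_on_product_l2:
  assumes "x \<in> l2"
  shows "(\<lambda>(i, j). (cmod (x i))^2 * (cmod (x j))^2) summable_on UNIV"
proof -
  have a: "(\<lambda>i. (cmod (x i))^2) summable_on UNIV"
    using assms unfolding l2_def by (simp add: summable_on_UNIV_nonneg_real_iff)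
  have "(\<lambda>(i, j). (cmod (x i))^2 * (cmod (x j))^2) summable_on Sigma UNIV (\<lambda>_. UNIV)"
  proof (rule summable_on_SigmaI)
    show "((\<lambda>j. case (i, j) of (i, j) \<Rightarrow> (cmod (x i))^2 * (cmod (x j))^2)
        has_sum (cmod (x i))^2 * infsum (\<lambda>j. (cmod (x j))^2) UNIV) UNIV" for i
      by (simp add: has_sum_cmult_right has_sum_infsum a)
    show "(\<lambda>i. (cmod (x i))^2 * infsum (\<lambda>j. (cmod (x j))^2) UNIV) summable_on UNIV"
      by (rule summable_on_cmult_left[OF a])
  qed auto
  then show ?thesis
    by simp
qed

lemma in_Htil_if_blocks_le:
  fixes w P :: "nat \<Rightarrow> nat \<Rightarrow> real"
  assumes P: "(\<lambda>(i, j). P i j) summable_on UNIV"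
    and head: "\<And>n. (w n 0)^2 \<le> c * P n n"
    and odd: "\<And>n m. (w n (2 * m + 1))^2 \<le> c * P n (n + m + 1)"
    and even: "\<And>n m. (w n (2 * m + 2))^2 \<le> c * P n (n + m + 1)"
  shows "w \<in> Htil"
proof -
  let ?f = "\<lambda>(n, j). (w n j)^2"
  have cP: "(\<lambda>(i, j). c * P i j) summable_on UNIV"
    using summable_on_cmult_right[OF P, of c] by (simp add: case_prod_unfold)
  have diag: "((\<lambda>(i, j). c * P i j) \<circ> diag_entry) summable_on UNIV"
    and upper: "((\<lambda>(i, j). c * P i j) \<circ> upper_entry) summable_on UNIV"
    using partition_entries cP by (auto simp: partition_by_injections_def intro: summable_on_comp_inj)
  have "?f summable_on UNIV"
  proof (rule summable_on_partition_by_injections[OF partition_blocks])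
    show "(?f \<circ> block_head) summable_on UNIV"
      by (rule summable_on_comparison_test[OF diag]) (auto simp: block_head_def diag_entry_def head)
    show "(?f \<circ> block_odd) summable_on UNIV"
      by (rule summable_on_comparison_test[OF upper]) (auto simp: block_odd_def upper_entry_def odd[simplified])
    show "(?f \<circ> block_even) summable_on UNIV"
      by (rule summable_on_comparison_test[OF upper]) (auto simp: block_even_def upper_entry_def even[simplified])
  qed
  then show ?thesis
    by (simp add: Htil_iff_square_summable square_summable_def case_prod_unfold)
qed

lemma Re_Im_square_le_cmod_square: "(Re z)^2 \<le> (cmod z)^2" "(Im z)^2 \<le> (cmod z)^2"
  using abs_Re_le_cmod[of z] abs_Im_le_cmod[of z] by (simp_all add: abs_le_square_iff[symmetric])

lemma tilde_blocks:
  "tilde x n 0 = (cmod (x n))^2"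
  "tilde x n (2 * m + 1) = Re (cnj (x n) * x (n + m + 1))"
  "tilde x n (2 * m + 2) = Im (cnj (x n) * x (n + m + 1))"
proof -
  have "(2 * m + 1 + 1) div 2 = m + 1" "(2 * m + 2 + 1) div 2 = m + 1" by presburger+
  then show "tilde x n 0 = (cmod (x n))^2"
    "tilde x n (2 * m + 1) = Re (cnj (x n) * x (n + m + 1))"
    "tilde x n (2 * m + 2) = Im (cnj (x n) * x (n + m + 1))"
    unfolding tilde_def by (simp_all add: add.assoc)
qed

lemma tilde_in_Htil:
  assumes "x \<in> l2"
  shows "tilde x \<in> Htil"
proof (rule in_Htil_if_blocks_le[OF summable_on_product_l2[OF assms], where c = 1])
  have "(cmod (cnj (x n) * x (n + m + 1)))^2 = 1 * ((cmod (x n))^2 * (cmod (x (n + m + 1)))^2)" for n m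
    by (simp add: norm_mult power_mult_distrib)
  then show "(tilde x n (2 * m + 1))^2 \<le> 1 * ((cmod (x n))^2 * (cmod (x (n + m + 1)))^2)"
    "(tilde x n (2 * m + 2))^2 \<le> 1 * ((cmod (x n))^2 * (cmod (x (n + m + 1)))^2)" for n m
    using Re_Im_square_le_cmod_square by (metis tilde_blocks(2,3))+
qed (simp add: tilde_blocks power2_eq_square)

text \<open>The factors \<open>2\<close> and \<open>-2\<close> account for \<open>t n (n + m)\<close> and its conjugate \<open>t (n + m) n\<close>
  both occurring in the quadratic form.\<close>

definition hs_vector :: "(nat \<Rightarrow> nat \<Rightarrow> complex) \<Rightarrow> nat \<Rightarrow> nat \<Rightarrow> real" where
  "hs_vector t n j =
     (if j = 0 then Re (t n n)
      else if odd j then 2 * Re (t n (n + (j + 1) div 2))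
      else - 2 * Im (t n (n + (j + 1) div 2)))"

definition hs_of_vector :: "(nat \<Rightarrow> nat \<Rightarrow> real) \<Rightarrow> nat \<Rightarrow> nat \<Rightarrow> complex" where
  "hs_of_vector u i j =
     (if i = j then of_real (u i 0)
      else if i < j then Complex (u i (2 * (j - i) - 1) / 2) (- u i (2 * (j - i)) / 2)
      else Complex (u j (2 * (i - j) - 1) / 2) (u j (2 * (i - j)) / 2))"

lemma hs_vector_blocks:
  "hs_vector t n 0 = Re (t n n)"
  "hs_vector t n (2 * m + 1) = 2 * Re (t n (n + m + 1))"
  "hs_vector t n (2 * m + 2) = - 2 * Im (t n (n + m + 1))"
proof -
  have "(2 * m + 1 + 1) div 2 = m + 1" "(2 * m + 2 + 1) div 2 = m + 1" by presburger+
  then show "hs_vector t n 0 = Re (t n n)"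
    "hs_vector t n (2 * m + 1) = 2 * Re (t n (n + m + 1))"
    "hs_vector t n (2 * m + 2) = - 2 * Im (t n (n + m + 1))"
    unfolding hs_vector_def by (simp_all add: add.assoc)
qed

lemma hs_of_vector_entries:
  "hs_of_vector u n n = of_real (u n 0)"
  "hs_of_vector u n (n + m + 1) = Complex (u n (2 * m + 1) / 2) (- u n (2 * m + 2) / 2)"
  "hs_of_vector u (n + m + 1) n = Complex (u n (2 * m + 1) / 2) (u n (2 * m + 2) / 2)"
proof -
  have "2 * (n + m + 1 - n) - 1 = 2 * m + 1" "2 * (n + m + 1 - n) = 2 * m + 2" by simp_all
  then show "hs_of_vector u n n = of_real (u n 0)"
    "hs_of_vector u n (n + m + 1) = Complex (u n (2 * m + 1) / 2) (- u n (2 * m + 2) / 2)"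
    "hs_of_vector u (n + m + 1) n = Complex (u n (2 * m + 1) / 2) (u n (2 * m + 2) / 2)"
    unfolding hs_of_vector_def by simp_all
qed

lemma hs_vector_hs_of_vector: "hs_vector (hs_of_vector u) = u"
proof (intro ext)
  fix n j :: nat
  have "j = 0 \<or> j = 2 * ((j - 1) div 2) + 1 \<or> j = 2 * ((j - 2) div 2) + 2"
    by presburger
  then consider "j = 0" | m where "j = 2 * m + 1" | m where "j = 2 * m + 2"
    by blast
  then show "hs_vector (hs_of_vector u) n j = u n j"
    by cases (simp_all only: hs_vector_blocks hs_of_vector_entries, simp_all)
qed

lemma hs_vector_in_Htil:
  assumes "hs_selfadjoint t"
  shows "hs_vector t \<in> Htil"
proof (rule in_Htil_if_blocks_le[where c = 4 and P = "\<lambda>i j. (cmod (t i j))^2"])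
  show "(\<lambda>(i, j). (cmod (t i j))^2) summable_on UNIV"
    using assms unfolding hs_selfadjoint_def by blast
  show "(hs_vector t n 0)^2 \<le> 4 * (cmod (t n n))^2" for n
    using Re_Im_square_le_cmod_square(1)[of "t n n"] zero_le_power2[of "cmod (t n n)"] unfolding hs_vector_blocks by linarith
  show "(hs_vector t n (2 * m + 1))^2 \<le> 4 * (cmod (t n (n + m + 1)))^2"
    "(hs_vector t n (2 * m + 2))^2 \<le> 4 * (cmod (t n (n + m + 1)))^2" for n m
    using Re_Im_square_le_cmod_square[of "t n (n + m + 1)"] unfolding hs_vector_blocks by (simp_all add: power_mult_distrib)
qed

lemma hs_selfadjoint_hs_of_vector:
  assumes "u \<in> Htil"
  shows "hs_selfadjoint (hs_of_vector u)"
  unfolding hs_selfadjoint_def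
proof (intro conjI allI)
  show "hs_of_vector u j i = cnj (hs_of_vector u i j)" for i j
    by (auto simp: hs_of_vector_def complex_eq_iff)
  let ?U = "\<lambda>(n, j). (u n j)^2"
  have "?U summable_on UNIV"
    using assms by (simp add: Htil_iff_square_summable square_summable_def case_prod_unfold)
  then have head: "(?U \<circ> block_head) summable_on UNIV"
    and "(?U \<circ> block_odd) summable_on UNIV" "(?U \<circ> block_even) summable_on UNIV"
    using partition_blocks by (simp_all add: partition_by_injections_def summable_on_comp_inj)
  then have odd_even: "(\<lambda>q. (1/4) * ((?U \<circ> block_odd) q + (?U \<circ> block_even) q)) summable_on UNIV"
    by (intro summable_on_cmult_right summable_on_add)
  let ?T = "\<lambda>(i, j). (cmod (hs_of_vector u i j))^2"
  show "?T summable_on UNIV"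
  proof (rule summable_on_partition_by_injections[OF partition_entries])
    show "(?T \<circ> diag_entry) summable_on UNIV"
      by (rule summable_on_comparison_test[OF head])
        (simp_all add: diag_entry_def block_head_def hs_of_vector_entries)
    show "(?T \<circ> upper_entry) summable_on UNIV"
      by (rule summable_on_comparison_test[OF odd_even])
        (auto simp: upper_entry_def block_odd_def block_even_def hs_of_vector_entries[simplified] cmod_power2 power_divide)
    show "(?T \<circ> lower_entry) summable_on UNIV"
      by (rule summable_on_comparison_test[OF odd_even])
        (auto simp: lower_entry_def block_odd_def block_even_def hs_of_vector_entries[simplified] cmod_power2 power_divide)
  qed
qed

lemma hs_vector_eq_0_imp_eq_0:
  assumes "hs_selfadjoint t" "hs_vector t = (\<lambda>_ _. 0)"
  shows "t i j = 0"
proof -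
  have herm: "t j i = cnj (t i j)" for i j
    using assms(1) unfolding hs_selfadjoint_def by blast
  have upper: "t n (n + m + 1) = 0" for n m
    using fun_cong[OF fun_cong[OF assms(2), of n], of "2 * m + 1"]
      fun_cong[OF fun_cong[OF assms(2), of n], of "2 * m + 2"]
    by (simp only: hs_vector_blocks) (simp add: complex_eq_iff)
  consider "i = j" | "i < j" | "j < i"
    by linarith
  then show ?thesis
  proof cases
    case 1
    have "Re (t i i) = 0"
      using fun_cong[OF fun_cong[OF assms(2), of i], of 0] by (simp only: hs_vector_blocks)
    moreover have "Im (t i i) = 0"
      using arg_cong[OF herm[of i i], of Im] by simp
    ultimately show ?thesis
      using 1 by (simp add: complex_eq_iff)
  next
    case 2
    then show ?thesis
      using upper[of i "j - i - 1"] by simp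
  next
    case 3
    then show ?thesis
      using upper[of j "i - j - 1"] herm[of j i] by simp
  qed
qed

section \<open>The quadratic form as an inner product\<close>

lemma summable_on_quad_form_terms:
  assumes t: "(\<lambda>(i, j). (cmod (t i j))^2) summable_on UNIV" and x: "x \<in> l2"
  shows "(\<lambda>(i, j). t i j * x j * cnj (x i)) summable_on UNIV"
proof -
  have "(\<lambda>(i, j). (cmod (t i j))^2 + (cmod (x i))^2 * (cmod (x j))^2) summable_on UNIV"
    using summable_on_add[OF t summable_on_product_l2[OF x]] by (simp add: case_prod_unfold)
  then have "(\<lambda>(i, j). norm (t i j * x j * cnj (x i))) summable_on UNIV"
  proof (rule summable_on_comparison_test)
    fix p :: "nat \<times> nat"
    obtain i j where p: "p = (i, j)" by (cases p)
    let ?a = "cmod (t i j)" and ?b = "cmod (x i) * cmod (x j)"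
    have "2 * ?a * ?b \<le> ?a^2 + (cmod (x i))^2 * (cmod (x j))^2"
      using sum_squares_bound[of ?a ?b] by (simp add: power_mult_distrib)
    moreover have "0 \<le> ?a * ?b" "norm (t i j * x j * cnj (x i)) = ?a * ?b"
      by (simp_all add: norm_mult)
    ultimately show "(case p of (i, j) \<Rightarrow> norm (t i j * x j * cnj (x i)))
        \<le> (case p of (i, j) \<Rightarrow> (cmod (t i j))^2 + (cmod (x i))^2 * (cmod (x j))^2)"
      unfolding p case_prod_conv by linarith
  qed (simp add: case_prod_unfold)
  then show ?thesis
    by (subst summable_on_iff_abs_summable_on_complex) (simp add: case_prod_unfold)
qed

lemma summable_on_row_mult_l2:
  assumes t: "(\<lambda>(i, j). (cmod (t i j))^2) summable_on UNIV" and x: "x \<in> l2"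
  shows "(\<lambda>j. t i j * x j) summable_on UNIV"
proof -
  have "(\<lambda>j. (cmod (t i j))^2) summable_on UNIV"
    using summable_on_comp_inj[OF t, of "Pair i"] by (simp add: inj_def o_def)
  moreover have "(\<lambda>j. (cmod (x j))^2) summable_on UNIV"
    using x unfolding l2_def by (simp add: summable_on_UNIV_nonneg_real_iff)
  ultimately have "(\<lambda>j. (cmod (t i j))^2 + (cmod (x j))^2) summable_on UNIV"
    by (rule summable_on_add)
  then have "(\<lambda>j. norm (t i j * x j)) summable_on UNIV"
  proof (rule summable_on_comparison_test)
    fix j
    have "2 * cmod (t i j) * cmod (x j) \<le> (cmod (t i j))^2 + (cmod (x j))^2"
      by (rule sum_squares_bound)
    moreover have "0 \<le> cmod (t i j) * cmod (x j)"
      by simp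
    ultimately show "norm (t i j * x j) \<le> (cmod (t i j))^2 + (cmod (x j))^2"
      unfolding norm_mult by linarith
  qed simp
  then show ?thesis
    using summable_on_iff_abs_summable_on_complex by blast
qed

lemma quad_form_eq_infsum:
  assumes t: "(\<lambda>(i, j). (cmod (t i j))^2) summable_on UNIV" and x: "x \<in> l2"
  shows "quad_form t x = infsum (\<lambda>(i, j). t i j * x j * cnj (x i)) UNIV"
proof -
  let ?f = "\<lambda>i j. t i j * x j * cnj (x i)"
  have f: "(\<lambda>(i, j). ?f i j) summable_on UNIV \<times> UNIV"
    using summable_on_quad_form_terms[OF t x] by simp
  have rows: "(\<lambda>i. infsum (?f i) UNIV) summable_on UNIV"
    by (rule summable_on_Sigma_banach[OF f])
  have row_sum: "infsum (?f i) UNIV = (\<Sum>j. t i j * x j) * cnj (x i)" for i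
  proof -
    have "infsum (\<lambda>j. t i j * x j) UNIV = (\<Sum>j. t i j * x j)"
      using has_sum_imp_sums[OF has_sum_infsum[OF summable_on_row_mult_l2[OF t x]]]
      by (simp add: sums_iff)
    then show ?thesis
      by (simp add: infsum_cmult_left')
  qed
  have "quad_form t x = (\<Sum>i. infsum (?f i) UNIV)"
    by (simp add: quad_form_def row_sum)
  also have "\<dots> = infsum (\<lambda>i. infsum (?f i) UNIV) UNIV"
    using has_sum_imp_sums[OF has_sum_infsum[OF rows]] by (simp add: sums_iff)
  also have "\<dots> = infsum (\<lambda>(i, j). ?f i j) UNIV"
    using infsum_Sigma'_banach[OF f] by simp
  finally show ?thesis .
qed

lemma Im_infsum_hermitian_eq_0:
  fixes f :: "'a \<times> 'a \<Rightarrow> complex"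
  assumes herm: "\<And>i j. f (j, i) = cnj (f (i, j))"
  shows "Im (infsum f UNIV) = 0"
proof -
  have swap: "f \<circ> prod.swap = (\<lambda>p. cnj (f p))"
  proof
    fix p :: "'a \<times> 'a"
    obtain i j where p: "p = (i, j)" by (cases p)
    show "(f \<circ> prod.swap) p = cnj (f p)"
      using herm[of i j] by (simp add: p)
  qed
  have "infsum f UNIV = infsum (f \<circ> prod.swap) UNIV"
    using infsum_reindex[of prod.swap UNIV f] by (simp add: surj_swap)
  then have "infsum f UNIV = cnj (infsum f UNIV)"
    unfolding swap infsum_cnj .
  then have "Im (infsum f UNIV) = Im (cnj (infsum f UNIV))"
    by (rule arg_cong)
  then show ?thesis
    by simp
qed

lemma infsum_hermitian:
  fixes f :: "nat \<times> nat \<Rightarrow> complex"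
  assumes f: "f summable_on UNIV" and herm: "\<And>i j. f (j, i) = cnj (f (i, j))"
  shows "infsum f UNIV =
    of_real (infsum (\<lambda>n. Re (f (n, n))) UNIV + 2 * infsum (\<lambda>(n, m). Re (f (n, n + m + 1))) UNIV)"
proof -
  let ?g = "\<lambda>p. Re (f p)"
  have g: "?g summable_on UNIV"
    using f by (rule summable_on_Re)
  have parts: "(?g \<circ> diag_entry) summable_on UNIV" "(?g \<circ> upper_entry) summable_on UNIV"
    "(?g \<circ> lower_entry) summable_on UNIV"
    using partition_entries g by (simp_all add: partition_by_injections_def summable_on_comp_inj)
  have lower: "?g \<circ> lower_entry = ?g \<circ> upper_entry"
  proof
    fix q :: "nat \<times> nat"
    obtain n m where q: "q = (n, m)" by (cases q)
    show "(?g \<circ> lower_entry) q = (?g \<circ> upper_entry) q"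
      using herm[of n "n + m + 1"] by (simp add: q lower_entry_def upper_entry_def)
  qed
  have "Re (infsum f UNIV) = infsum ?g UNIV"
    by (rule infsum_Re[OF f, symmetric])
  also have "\<dots> = infsum (?g \<circ> diag_entry) UNIV + 2 * infsum (?g \<circ> upper_entry) UNIV"
    unfolding infsum_partition_by_injections[OF partition_entries parts] lower by simp
  also have "\<dots> = infsum (\<lambda>n. Re (f (n, n))) UNIV + 2 * infsum (\<lambda>(n, m). Re (f (n, n + m + 1))) UNIV"
    by (simp add: o_def diag_entry_def upper_entry_def case_prod_unfold)
  finally show ?thesis
    using Im_infsum_hermitian_eq_0[of f, OF herm] by (simp add: complex_eq_iff)
qed

lemma infsum_hs_vector_mult_tilde:
  assumes t: "hs_selfadjoint t" and x: "x \<in> l2"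
  shows "infsum (\<lambda>(n, j). hs_vector t n j * tilde x n j) UNIV =
    infsum (\<lambda>n. Re (t n n * x n * cnj (x n))) UNIV
    + 2 * infsum (\<lambda>(n, m). Re (t n (n + m + 1) * x (n + m + 1) * cnj (x n))) UNIV"
proof -
  let ?g = "\<lambda>(n, j). hs_vector t n j * tilde x n j"
  have "?g summable_on UNIV"
    using summable_on_mult_if_square_summable hs_vector_in_Htil[OF t] tilde_in_Htil[OF x]
    by (fastforce simp: Htil_iff_square_summable case_prod_unfold)
  then have parts: "(?g \<circ> block_head) summable_on UNIV" "(?g \<circ> block_odd) summable_on UNIV"
      "(?g \<circ> block_even) summable_on UNIV"
    using partition_blocks by (simp_all add: partition_by_injections_def summable_on_comp_inj)
  have head: "?g \<circ> block_head = (\<lambda>n. Re (t n n * x n * cnj (x n)))"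
  proof
    fix n
    have "Re (t n n * x n * cnj (x n)) = Re (t n n) * (cmod (x n))^2"
      by (simp add: mult.assoc complex_norm_square[symmetric])
    then show "(?g \<circ> block_head) n = Re (t n n * x n * cnj (x n))"
      by (simp add: block_head_def hs_vector_blocks tilde_blocks)
  qed
  let ?R = "\<lambda>(n, m). Re (t n (n + m + 1) * x (n + m + 1) * cnj (x n))"
  have odd_even: "(\<lambda>q. (?g \<circ> block_odd) q + (?g \<circ> block_even) q) = (\<lambda>q. 2 * ?R q)"
  proof
    fix q :: "nat \<times> nat"
    obtain n m where q: "q = (n, m)" by (cases q)
    let ?\<tau> = "t n (n + m + 1)" and ?z = "cnj (x n) * x (n + m + 1)"
    have "(?g \<circ> block_odd) (n, m) + (?g \<circ> block_even) (n, m)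
        = 2 * Re ?\<tau> * Re ?z - 2 * Im ?\<tau> * Im ?z"
      by (simp only: o_def block_odd_def block_even_def case_prod_conv hs_vector_blocks tilde_blocks)
    also have "\<dots> = 2 * Re (t n (n + m + 1) * x (n + m + 1) * cnj (x n))"
      by (simp add: algebra_simps)
    finally show "(?g \<circ> block_odd) q + (?g \<circ> block_even) q = 2 * ?R q"
      by (simp add: q)
  qed
  have "infsum ?g UNIV = infsum (?g \<circ> block_head) UNIV
      + infsum (\<lambda>q. (?g \<circ> block_odd) q + (?g \<circ> block_even) q) UNIV"
    using infsum_partition_by_injections[OF partition_blocks parts] infsum_add[OF parts(2,3)] by simp
  then show ?thesis
    unfolding head odd_even infsum_cmult_right' .
qed

lemma quad_form_eq_inner_hs_vector_tilde:
  assumes t: "hs_selfadjoint t" and x: "x \<in> l2"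
  shows "quad_form t x = of_real (inner (ell2_of (hs_vector t)) (ell2_of (tilde x)))"
proof -
  have hs: "(\<lambda>(i, j). (cmod (t i j))^2) summable_on UNIV"
    using t unfolding hs_selfadjoint_def by blast
  have herm: "t j i = cnj (t i j)" for i j
    using t unfolding hs_selfadjoint_def by blast
  have "quad_form t x = infsum (\<lambda>(i, j). t i j * x j * cnj (x i)) UNIV"
    by (rule quad_form_eq_infsum[OF hs x])
  also have "\<dots> = of_real (infsum (\<lambda>n. Re (t n n * x n * cnj (x n))) UNIV
      + 2 * infsum (\<lambda>(n, m). Re (t n (n + m + 1) * x (n + m + 1) * cnj (x n))) UNIV)"
  proof -
    have "(\<lambda>(i, j). t i j * x j * cnj (x i)) (j, i) = cnj ((\<lambda>(i, j). t i j * x j * cnj (x i)) (i, j))"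
      for i j
      using herm[of i j] by (simp add: mult_ac)
    then show ?thesis
      using infsum_hermitian[OF summable_on_quad_form_terms[OF hs x]] by simp
  qed
  also have "\<dots> = of_real (inner (ell2_of (hs_vector t)) (ell2_of (tilde x)))"
    unfolding inner_ell2_of[OF hs_vector_in_Htil[OF t] tilde_in_Htil[OF x]]
    by (simp only: infsum_hs_vector_mult_tilde[OF t x])
  finally show ?thesis .
qed

section \<open>Injectivity versus density\<close>

lemma coord_sum: "coord (sum f F) p = (\<Sum>k\<in>F. coord (f k) p)"
  by (induction F rule: infinite_finite_induct) auto

lemma ell2_of_eq_0_iff:
  assumes "w \<in> Htil"
  shows "ell2_of w = 0 \<longleftrightarrow> w = (\<lambda>_ _. 0)"
proof -
  have "ell2_of w = 0 \<longleftrightarrow> coord (ell2_of w) = coord 0"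
    by (rule coord_inject[symmetric])
  also have "\<dots> \<longleftrightarrow> w = (\<lambda>_ _. 0)"
    unfolding coord_ell2_of[OF assms] coord_zero
  proof
    assume h: "(\<lambda>(n, j). w n j) = (\<lambda>_. 0)"
    show "w = (\<lambda>_ _. 0)"
    proof (intro ext)
      show "w n j = 0" for n j
        using fun_cong[OF h, of "(n, j)"] by simp
    qed
  qed (simp add: case_prod_unfold)
  finally show ?thesis .
qed

lemma Htil_norm_diff_eq_norm:
  assumes v: "v \<in> Htil" and X: "\<And>k. X k \<in> l2"
  shows "Htil_norm (\<lambda>n j. v n j - (\<Sum>k\<in>F. c k * tilde (X k) n j)) =
    norm (ell2_of v - (\<Sum>k\<in>F. c k *\<^sub>R ell2_of (tilde (X k))))"
proof -
  let ?Y = "ell2_of v - (\<Sum>k\<in>F. c k *\<^sub>R ell2_of (tilde (X k)))"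
  have "(\<lambda>n j. v n j - (\<Sum>k\<in>F. c k * tilde (X k) n j)) = (\<lambda>n j. coord ?Y (n, j))"
    by (simp add: coord_sum coord_ell2_of[OF v] coord_ell2_of[OF tilde_in_Htil[OF X]])
  then show ?thesis
    by (simp only: Htil_norm_eq_norm_ell2_of[OF curry_coord_in_Htil] ell2_of_curry_coord)
qed

lemma span_range_explicit:
  assumes "y \<in> span (range f)"
  obtains F c where "finite F" "y = (\<Sum>k\<in>F. c k *\<^sub>R f k)"
proof -
  obtain S r where S: "finite S" "S \<subseteq> range f" "y = (\<Sum>a\<in>S. r a *\<^sub>R a)"
    using assms unfolding span_explicit by blast
  define g where "g = inv_into UNIV f"
  have fg: "f (g a) = a" if "a \<in> S" for a
    using S(2) that unfolding g_def by (auto intro: f_inv_into_f)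
  have "inj_on g S"
    by (metis fg inj_onI)
  then have "(\<Sum>k\<in>g ` S. r (f k) *\<^sub>R f k) = (\<Sum>a\<in>S. r (f (g a)) *\<^sub>R f (g a))"
    by (rule sum.reindex[unfolded o_def])
  also have "\<dots> = y"
    unfolding S(3) by (rule sum.cong) (simp_all add: fg)
  finally have "y = (\<Sum>k\<in>g ` S. r (f k) *\<^sub>R f k)" ..
  then show ?thesis
    using that[of "g ` S" "\<lambda>k. r (f k)"] S(1) by simp
qed

lemma closed_span_is_Htil_iff_dense:
  assumes X: "\<And>k. X k \<in> l2"
  shows "closed_span_is_Htil X \<longleftrightarrow> closure (span (range (\<lambda>k. ell2_of (tilde (X k))))) = UNIV"
    (is "_ \<longleftrightarrow> closure (span (range ?f)) = UNIV")
proof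
  assume approx: "closed_span_is_Htil X"
  have "u \<in> closure (span (range ?f))" for u
  proof (subst closure_approachable, intro allI impI)
    fix e :: real assume "e > 0"
    let ?v = "\<lambda>n j. coord u (n, j)"
    obtain F c where "finite F" and close: "Htil_norm (\<lambda>n j. ?v n j - (\<Sum>k\<in>F. c k * tilde (X k) n j)) < e"
      using approx[unfolded closed_span_is_Htil_def, rule_format, OF curry_coord_in_Htil \<open>e > 0\<close>]
      by blast
    have "(\<Sum>k\<in>F. c k *\<^sub>R ?f k) \<in> span (range ?f)"
      by (intro span_sum span_mul span_base) auto
    moreover have "dist (\<Sum>k\<in>F. c k *\<^sub>R ?f k) u < e"
      using close unfolding Htil_norm_diff_eq_norm[OF curry_coord_in_Htil X] ell2_of_curry_coord
      by (simp add: dist_norm norm_minus_commute)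
    ultimately show "\<exists>y\<in>span (range ?f). dist y u < e"
      by blast
  qed
  then show "closure (span (range ?f)) = UNIV"
    by blast
next
  assume dense: "closure (span (range ?f)) = UNIV"
  show "closed_span_is_Htil X"
    unfolding closed_span_is_Htil_def
  proof (intro ballI allI impI)
    fix v e assume v: "v \<in> Htil" and "(e::real) > 0"
    obtain y where "y \<in> span (range ?f)" "dist y (ell2_of v) < e"
      using dense \<open>e > 0\<close> closure_approachable[of "ell2_of v" "span (range ?f)"] by blast
    moreover obtain F c where "finite F" "y = (\<Sum>k\<in>F. c k *\<^sub>R ?f k)"
      using span_range_explicit[OF \<open>y \<in> span (range ?f)\<close>] by blast
    ultimately show "\<exists>F c. finite F \<and> Htil_norm (\<lambda>n j. v n j - (\<Sum>k\<in>F. c k * tilde (X k) n j)) < e"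
      unfolding Htil_norm_diff_eq_norm[OF v X] by (auto simp: dist_norm norm_minus_commute)
  qed
qed

lemma orthogonal_eq_0_if_injective_family:
  assumes X: "\<And>k. X k \<in> l2" and inj: "injective_family X"
    and orth: "\<And>k. inner u (ell2_of (tilde (X k))) = 0"
  shows "u = 0"
proof -
  define w where "w = (\<lambda>n j. coord u (n, j))"
  have w: "w \<in> Htil" and u: "ell2_of w = u"
    unfolding w_def by (rule curry_coord_in_Htil, rule ell2_of_curry_coord)
  have t: "hs_selfadjoint (hs_of_vector w)"
    using w by (rule hs_selfadjoint_hs_of_vector)
  have "\<forall>k. quad_form (hs_of_vector w) (X k) = 0"
    using orth quad_form_eq_inner_hs_vector_tilde[OF t X] by (simp add: hs_vector_hs_of_vector u)
  then have "\<forall>i j. hs_of_vector w i j = 0"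
    using inj t unfolding injective_family_def by blast
  then have "hs_vector (hs_of_vector w) = (\<lambda>_ _. 0)"
    by (simp add: hs_vector_def fun_eq_iff)
  then have "w = (\<lambda>_ _. 0)"
    by (simp add: hs_vector_hs_of_vector)
  then show "u = 0"
    using ell2_of_eq_0_iff[OF w] u by simp
qed

lemma injective_family_if_orthogonal_eq_0:
  assumes X: "\<And>k. X k \<in> l2"
    and trivial: "\<And>u. (\<And>k. inner u (ell2_of (tilde (X k))) = 0) \<Longrightarrow> u = 0"
  shows "injective_family X"
  unfolding injective_family_def
proof (intro allI impI)
  fix t i j assume "hs_selfadjoint t \<and> (\<forall>k. quad_form t (X k) = 0)"
  then have t: "hs_selfadjoint t" and quad: "\<And>k. quad_form t (X k) = 0"
    by auto
  have "inner (ell2_of (hs_vector t)) (ell2_of (tilde (X k))) = 0" for k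
    using quad[of k] quad_form_eq_inner_hs_vector_tilde[OF t X] by simp
  then have "ell2_of (hs_vector t) = 0"
    by (rule trivial)
  then have "hs_vector t = (\<lambda>_ _. 0)"
    using ell2_of_eq_0_iff[OF hs_vector_in_Htil[OF t]] by simp
  then show "t i j = 0"
    by (rule hs_vector_eq_0_imp_eq_0[OF t])
qed

lemma injective_family_iff_orthogonal_eq_0:
  assumes X: "\<And>k. X k \<in> l2"
  shows "injective_family X \<longleftrightarrow>
    (\<forall>u. (\<forall>b\<in>range (\<lambda>k. ell2_of (tilde (X k))). inner u b = 0) \<longrightarrow> u = 0)"
  using orthogonal_eq_0_if_injective_family[of X, OF X] injective_family_if_orthogonal_eq_0[of X, OF X]
  by blast

theorem mainTheorem12:
  fixes X :: "nat \<Rightarrow> nat \<Rightarrow> complex"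
  assumes "is_frame X"
  shows "injective_family X \<longleftrightarrow> closed_span_is_Htil X"
proof -
  have X: "\<And>k. X k \<in> l2"
    using assms unfolding is_frame_def by blast
  show ?thesis
    unfolding injective_family_iff_orthogonal_eq_0[OF X] closed_span_is_Htil_iff_dense[OF X]
      dense_span_iff_orthogonal_eq_0 ..
qed

end
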